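(* Let $\Gamma$ be a group and let $A$ be a set. Then the map $\Psi \colon \mathcal{N}(\Gamma) \to \mathcal{P}(A^\Gamma)$ defined by $\Psi(N) = \mathrm{Fix}(N)$ is uniformly continuous. Moreover, if $A$ contains at least two elements, then $\Psi$ is a uniform embedding.
   Context: $\mathcal{N}(\Gamma)$ is the set of normal subgroups of $\Gamma$, with the uniform structure induced from the prodiscrete uniform structure on $\mathcal{P}(\Gamma) = \{0,1\}^\Gamma$ (a base of entourages is $\{(N_1,N_2) : N_1 \cap F = N_2 \cap F\}$, $F \subset \Gamma$ finite). $A^\Gamma$ carries the prodiscrete uniform structure and the shift $(\gamma x)(\alpha) = x(\gamma^{-1}\alpha)$, and $\mathrm{Fix}(N) = \{x \in A^\Gamma : \gamma x = x \ \forall \gamma \in N\}$. $\mathcal{P}(A^\Gamma)$ carries the Hausdorff-Bourbaki uniform structure, which has as a base the sets $\widehat{V} = \{(B,C) : C \subset V[B] \text{ and } B \subset V[C]\}$, $V$ an entourage of $A^\Gamma$, where $V[B] = \{x : (x,b) \in V \text{ for some } b \in B\}$. A uniform embedding is an injective map inducing a uniform isomorphism onto its image. *)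

theory Defs
  imports Main "HOL-Library.FuncSet"
begin

text \<open>The group \<Gamma> is a type of class group_add (written additively, not necessarily
commutative); the alphabet A is an arbitrary set A :: 'a set.\<close>

definition normal_subgroups :: "'g::group_add set set" where
  "normal_subgroups = {N. 0 \<in> N \<and> (\<forall>x\<in>N. \<forall>y\<in>N. x + y \<in> N) \<and> (\<forall>x\<in>N. - x \<in> N)
       \<and> (\<forall>g. \<forall>n\<in>N. g + n - g \<in> N)}"

definition configs :: "'a set \<Rightarrow> ('g \<Rightarrow> 'a) set" where
  "configs A = (UNIV :: 'g set) \<rightarrow> A"

definition shift :: "'g::group_add \<Rightarrow> ('g \<Rightarrow> 'a) \<Rightarrow> ('g \<Rightarrow> 'a)" where
  "shift \<gamma> x = (\<lambda>\<alpha>. x (- \<gamma> + \<alpha>))"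

definition Fix :: "'a set \<Rightarrow> 'g::group_add set \<Rightarrow> ('g \<Rightarrow> 'a) set" where
  "Fix A N = {x \<in> configs A. \<forall>\<gamma>\<in>N. shift \<gamma> x = x}"

text \<open>Prodiscrete uniform structure on A^\<Gamma> (all entourages).\<close>
definition config_entourages :: "'a set \<Rightarrow> (('g \<Rightarrow> 'a) \<times> ('g \<Rightarrow> 'a)) set set" where
  "config_entourages A = {V. V \<subseteq> configs A \<times> configs A \<and>
     (\<exists>F. finite F \<and> {(x, y). x \<in> configs A \<and> y \<in> configs A \<and> (\<forall>g\<in>F. x g = y g)} \<subseteq> V)}"

definition rel_nbhd :: "('b \<times> 'b) set \<Rightarrow> 'b set \<Rightarrow> 'b set" where
  "rel_nbhd V B = {x. \<exists>b\<in>B. (x, b) \<in> V}"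

definition hb_hat :: "'b set \<Rightarrow> ('b \<times> 'b) set \<Rightarrow> ('b set \<times> 'b set) set" where
  "hb_hat X V = {(B, C). B \<subseteq> X \<and> C \<subseteq> X \<and> C \<subseteq> rel_nbhd V B \<and> B \<subseteq> rel_nbhd V C}"

text \<open>Hausdorff-Bourbaki uniform structure on P(A^\<Gamma>) (all entourages).\<close>
definition hb_entourages :: "'a set \<Rightarrow> (('g \<Rightarrow> 'a) set \<times> ('g \<Rightarrow> 'a) set) set set" where
  "hb_entourages A = {W. W \<subseteq> Pow (configs A) \<times> Pow (configs A) \<and>
     (\<exists>V\<in>config_entourages A. hb_hat (configs A) V \<subseteq> W)}"

text \<open>Uniform structure on N(\<Gamma>) induced from the prodiscrete structure on P(\<Gamma>).\<close>
definition nsub_entourages :: "('g::group_add set \<times> 'g set) set set" where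
  "nsub_entourages = {U. U \<subseteq> normal_subgroups \<times> normal_subgroups \<and>
     (\<exists>F. finite F \<and> {(N1, N2). N1 \<in> normal_subgroups \<and> N2 \<in> normal_subgroups
                         \<and> N1 \<inter> F = N2 \<inter> F} \<subseteq> U)}"

definition unif_cont :: "'x set \<Rightarrow> ('x \<times> 'x) set set \<Rightarrow> ('y \<times> 'y) set set \<Rightarrow> ('x \<Rightarrow> 'y) \<Rightarrow> bool" where
  "unif_cont X EntX EntY f \<longleftrightarrow> (\<forall>W\<in>EntY. \<exists>U\<in>EntX. \<forall>x\<in>X. \<forall>y\<in>X. (x, y) \<in> U \<longrightarrow> (f x, f y) \<in> W)"

text \<open>Uniform embedding: injective and a uniform isomorphism onto its image
(with the subspace uniformity, whose entourages are W \<inter> (f`X \<times> f`X)).\<close>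
definition unif_embedding :: "'x set \<Rightarrow> ('x \<times> 'x) set set \<Rightarrow> ('y \<times> 'y) set set \<Rightarrow> ('x \<Rightarrow> 'y) \<Rightarrow> bool" where
  "unif_embedding X EntX EntY f \<longleftrightarrow> inj_on f X \<and> unif_cont X EntX EntY f \<and>
     (\<forall>U\<in>EntX. \<exists>W\<in>EntY. \<forall>x\<in>X. \<forall>y\<in>X. (f x, f y) \<in> W \<longrightarrow> (x, y) \<in> U)"

end

theory Submission
  imports Defs
begin

text \<open>Fix(N) consists of the configurations constant on the cosets of N. If two normal subgroups
agree on the finite set F - F of differences, a configuration fixed by one can be redefined on
each coset of the other through a point of F, so that it is fixed by the other and unchanged on
F; this gives uniform continuity. Conversely, when A has two letters, the indicator of N1 is fixed
by N1 but takes different values at 0 and at any g \<in> N2 - N1, while every configuration fixed by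
N2 takes the same value there; so agreement on {0} \<union> F detects N1 \<inter> F = N2 \<inter> F.\<close>

definition differences :: "'g::group_add set \<Rightarrow> 'g set" where
  "differences F = (\<lambda>(a, b). b - a) ` (F \<times> F)"

definition agree_entourage :: "'a set \<Rightarrow> 'g set \<Rightarrow> (('g \<Rightarrow> 'a) \<times> ('g \<Rightarrow> 'a)) set" where
  "agree_entourage A F = {(x, y). x \<in> configs A \<and> y \<in> configs A \<and> (\<forall>g\<in>F. x g = y g)}"

definition nsub_agree_entourage :: "'g::group_add set \<Rightarrow> ('g set \<times> 'g set) set" where
  "nsub_agree_entourage F =
     {(N1, N2). N1 \<in> normal_subgroups \<and> N2 \<in> normal_subgroups \<and> N1 \<inter> F = N2 \<inter> F}"

lemma finite_differences: "finite F \<Longrightarrow> finite (differences F)"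
  unfolding differences_def by simp

lemma diff_in_differences: "a \<in> F \<Longrightarrow> b \<in> F \<Longrightarrow> b - a \<in> differences F"
  unfolding differences_def by force

lemma config_entouragesE:
  assumes "V \<in> config_entourages A"
  obtains F where "finite F" "agree_entourage A F \<subseteq> V"
  using assms unfolding config_entourages_def agree_entourage_def by blast

lemma agree_entourage_in_config_entourages:
  "finite F \<Longrightarrow> agree_entourage A F \<in> config_entourages A"
  unfolding config_entourages_def agree_entourage_def by blast

lemma nsub_entouragesE:
  assumes "U \<in> nsub_entourages"
  obtains F where "finite F" "nsub_agree_entourage F \<subseteq> U"
  using assms unfolding nsub_entourages_def nsub_agree_entourage_def by blast

lemma nsub_agree_entourage_in_nsub_entourages:
  "finite F \<Longrightarrow> nsub_agree_entourage F \<in> nsub_entourages"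
  unfolding nsub_entourages_def nsub_agree_entourage_def by blast

lemma hb_hat_in_hb_entourages:
  "V \<in> config_entourages A \<Longrightarrow> hb_hat (configs A) V \<in> hb_entourages A"
  unfolding hb_entourages_def hb_hat_def by blast

lemma normal_subgroupsD:
  assumes "N \<in> normal_subgroups"
  shows "0 \<in> N" "x \<in> N \<Longrightarrow> y \<in> N \<Longrightarrow> x + y \<in> N" "x \<in> N \<Longrightarrow> - x \<in> N"
  using assms unfolding normal_subgroups_def by auto

lemma normal_subgroup_diff_iff:
  fixes N :: "'g::group_add set"
  assumes "N \<in> normal_subgroups" "t - s \<in> N"
  shows "t - a \<in> N \<longleftrightarrow> s - a \<in> N"
proof
  assume "t - a \<in> N"
  then have "- (t - s) + (t - a) \<in> N" using assms normal_subgroupsD by blast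
  moreover have "- (t - s) + (t - a) = s - a"
    by (simp only: diff_conv_add_uminus minus_add minus_minus add.assoc minus_add_cancel)
  ultimately show "s - a \<in> N" by simp
next
  assume "s - a \<in> N"
  then have "(t - s) + (s - a) \<in> N" using assms normal_subgroupsD by blast
  moreover have "(t - s) + (s - a) = t - a"
    by (simp only: diff_conv_add_uminus add.assoc minus_add_cancel)
  ultimately show "t - a \<in> N" by simp
qed

lemma Fix_subset_configs: "Fix A N \<subseteq> configs A"
  unfolding Fix_def by auto

lemma Fix_iff:
  fixes N :: "'g::group_add set"
  assumes "N \<in> normal_subgroups"
  shows "x \<in> Fix A N \<longleftrightarrow> x \<in> configs A \<and> (\<forall>s t. t - s \<in> N \<longrightarrow> x t = x s)"
proof -
  have "shift n x = x \<longleftrightarrow> (\<forall>s. x (- n + s) = x s)" for n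
    unfolding shift_def by (simp add: fun_eq_iff)
  moreover have "(\<forall>n\<in>N. \<forall>s. x (- n + s) = x s) \<longleftrightarrow> (\<forall>s t. t - s \<in> N \<longrightarrow> x t = x s)"
  proof safe
    fix s t assume "\<forall>n\<in>N. \<forall>s. x (- n + s) = x s" "t - s \<in> N"
    then have "x (- (- (t - s)) + s) = x s" using normal_subgroupsD(3)[OF assms] by blast
    then show "x t = x s" by (simp add: add.assoc)
  next
    fix n s assume "\<forall>s t. t - s \<in> N \<longrightarrow> x t = x s" "n \<in> N"
    moreover have "(- n + s) - s = - n" by (simp add: add.assoc)
    ultimately show "x (- n + s) = x s" using normal_subgroupsD(3)[OF assms] by metis
  qed
  ultimately show ?thesis unfolding Fix_def by auto
qed

lemma indicator_in_Fix:
  fixes N :: "'g::group_add set"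
  assumes "N \<in> normal_subgroups" "a \<in> A" "b \<in> A"
  shows "(\<lambda>t. if t \<in> N then a else b) \<in> Fix A N"
  using assms normal_subgroup_diff_iff[OF assms(1), where a = 0]
  unfolding Fix_iff[OF assms(1)] configs_def by auto

lemma Fix_extend:
  fixes N1 N2 :: "'g::group_add set"
  assumes N1: "N1 \<in> normal_subgroups" and N2: "N2 \<in> normal_subgroups"
    and diffs: "N2 \<inter> differences F \<subseteq> N1" and x: "x \<in> Fix A N1"
  shows "\<exists>y\<in>Fix A N2. \<forall>g\<in>F. x g = y g"
proof -
  define rep where "rep t = (SOME a. a \<in> F \<and> t - a \<in> N2)" for t
  define y where "y t = (if \<exists>a\<in>F. t - a \<in> N2 then x (rep t) else x 0)" for t
  have x_const: "x t = x s" if "t - s \<in> N1" for s t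
    using x that unfolding Fix_iff[OF N1] by blast
  have "x t \<in> A" for t
    using x Fix_subset_configs unfolding configs_def by blast
  then have "y \<in> configs A"
    unfolding configs_def y_def by simp
  moreover have "y t = y s" if "t - s \<in> N2" for s t
  proof -
    have "t - a \<in> N2 \<longleftrightarrow> s - a \<in> N2" for a
      using normal_subgroup_diff_iff[OF N2 that] .
    then show ?thesis unfolding y_def rep_def by simp
  qed
  ultimately have "y \<in> Fix A N2" unfolding Fix_iff[OF N2] by blast
  moreover have "x g = y g" if g: "g \<in> F" for g
  proof -
    have ex: "\<exists>a. a \<in> F \<and> g - a \<in> N2"
      using g normal_subgroupsD(1)[OF N2] by (intro exI[of _ g]) simp
    then have rep: "rep g \<in> F" "g - rep g \<in> N2"
      unfolding rep_def by (metis (mono_tags, lifting) someI_ex)+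
    then have "g - rep g \<in> N1" using diffs g diff_in_differences by blast
    then have "x g = x (rep g)" by (rule x_const)
    then show ?thesis using ex unfolding y_def by auto
  qed
  ultimately show ?thesis by blast
qed

lemma Fix_subset_nbhd:
  fixes N1 N2 :: "'g::group_add set"
  assumes "N1 \<in> normal_subgroups" "N2 \<in> normal_subgroups" "N2 \<inter> differences F \<subseteq> N1"
  shows "Fix A N1 \<subseteq> rel_nbhd (agree_entourage A F) (Fix A N2)"
proof
  fix x assume x: "x \<in> Fix A N1"
  then obtain y where "y \<in> Fix A N2" "\<forall>g\<in>F. x g = y g"
    using Fix_extend[OF assms] by blast
  then show "x \<in> rel_nbhd (agree_entourage A F) (Fix A N2)"
    using x Fix_subset_configs unfolding rel_nbhd_def agree_entourage_def by blast
qed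

lemma Fix_subset_nbhd_imp_subset:
  fixes N1 N2 :: "'g::group_add set"
  assumes ab: "a \<in> A" "b \<in> A" "a \<noteq> b"
    and N1: "N1 \<in> normal_subgroups" and N2: "N2 \<in> normal_subgroups" and "0 \<in> F"
    and sub: "Fix A N1 \<subseteq> rel_nbhd (agree_entourage A F) (Fix A N2)"
  shows "N2 \<inter> F \<subseteq> N1"
proof
  fix g assume g: "g \<in> N2 \<inter> F"
  define x where "x t = (if t \<in> N1 then a else b)" for t
  have "x \<in> Fix A N1" unfolding x_def using indicator_in_Fix[OF N1 ab(1,2)] .
  then obtain y where y: "y \<in> Fix A N2" "\<forall>h\<in>F. x h = y h"
    using sub unfolding rel_nbhd_def agree_entourage_def by blast
  have "y g = y 0" using y(1) g unfolding Fix_iff[OF N2] by simp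
  then have "x g = x 0" using y(2) g \<open>0 \<in> F\<close> by simp
  then show "g \<in> N1" using normal_subgroupsD(1)[OF N1] ab(3) unfolding x_def by argo
qed

lemma hb_hat_mono: "V \<subseteq> V' \<Longrightarrow> hb_hat X V \<subseteq> hb_hat X V'"
  unfolding hb_hat_def rel_nbhd_def by fast

lemma hb_hat_Fix_iff:
  "(Fix A N1, Fix A N2) \<in> hb_hat (configs A) V \<longleftrightarrow>
     Fix A N1 \<subseteq> rel_nbhd V (Fix A N2) \<and> Fix A N2 \<subseteq> rel_nbhd V (Fix A N1)"
  unfolding hb_hat_def using Fix_subset_configs by blast

lemma unif_cont_Fix:
  fixes A :: "'a set"
  shows "unif_cont (normal_subgroups :: 'g::group_add set set) nsub_entourages (hb_entourages A) (Fix A)"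
  unfolding unif_cont_def
proof
  fix W :: "(('g \<Rightarrow> 'a) set \<times> ('g \<Rightarrow> 'a) set) set"
  assume "W \<in> hb_entourages A"
  then obtain V where V: "V \<in> config_entourages A" "hb_hat (configs A) V \<subseteq> W"
    unfolding hb_entourages_def by blast
  then obtain F where F: "finite F" "agree_entourage A F \<subseteq> V"
    by (elim config_entouragesE)
  have "(Fix A N1, Fix A N2) \<in> W" if "(N1, N2) \<in> nsub_agree_entourage (differences F)"
    for N1 N2 :: "'g set"
  proof -
    have N: "N1 \<in> normal_subgroups" "N2 \<in> normal_subgroups"
      and "N2 \<inter> differences F \<subseteq> N1" "N1 \<inter> differences F \<subseteq> N2"
      using that unfolding nsub_agree_entourage_def by auto
    then have "(Fix A N1, Fix A N2) \<in> hb_hat (configs A) (agree_entourage A F)"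
      unfolding hb_hat_Fix_iff by (simp add: Fix_subset_nbhd)
    then show ?thesis using hb_hat_mono[OF F(2)] V(2) by fast
  qed
  then show "\<exists>U\<in>nsub_entourages. \<forall>N1\<in>normal_subgroups. \<forall>N2\<in>normal_subgroups.
      (N1, N2) \<in> U \<longrightarrow> (Fix A N1, Fix A N2) \<in> W"
    by (intro bexI[of _ "nsub_agree_entourage (differences F)"]
        nsub_agree_entourage_in_nsub_entourages finite_differences F(1)) simp
qed

lemma Fix_reflects_entourages:
  fixes U :: "('g::group_add set \<times> 'g set) set"
  assumes ab: "a \<in> A" "b \<in> A" "a \<noteq> b" and U: "U \<in> nsub_entourages"
  shows "\<exists>W\<in>hb_entourages A. \<forall>N1\<in>normal_subgroups. \<forall>N2\<in>normal_subgroups.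
           (Fix A N1, Fix A N2) \<in> W \<longrightarrow> (N1, N2) \<in> U"
proof -
  obtain F where F: "finite F" "nsub_agree_entourage F \<subseteq> U"
    using U by (elim nsub_entouragesE)
  let ?V = "agree_entourage A (insert 0 F)"
  have "(N1, N2) \<in> U"
    if N: "N1 \<in> normal_subgroups" "N2 \<in> normal_subgroups"
      and "(Fix A N1, Fix A N2) \<in> hb_hat (configs A) ?V" for N1 N2
  proof -
    have "N2 \<inter> insert 0 F \<subseteq> N1" "N1 \<inter> insert 0 F \<subseteq> N2"
      using that Fix_subset_nbhd_imp_subset[OF ab] unfolding hb_hat_Fix_iff by blast+
    then have "N1 \<inter> F = N2 \<inter> F" by blast
    then show ?thesis using N F(2) unfolding nsub_agree_entourage_def by blast
  qed
  moreover have "hb_hat (configs A) ?V \<in> hb_entourages A"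
    using F(1) by (simp add: hb_hat_in_hb_entourages agree_entourage_in_config_entourages)
  ultimately show ?thesis by blast
qed

lemma inj_on_Fix:
  assumes "a \<in> A" "b \<in> A" "a \<noteq> b"
  shows "inj_on (Fix A) (normal_subgroups :: 'g::group_add set set)"
proof (rule inj_onI)
  fix N1 N2 :: "'g set"
  assume N: "N1 \<in> normal_subgroups" "N2 \<in> normal_subgroups" and eq: "Fix A N1 = Fix A N2"
  have self: "Fix A N \<subseteq> rel_nbhd (agree_entourage A UNIV) (Fix A N)" for N :: "'g set"
    using Fix_subset_configs unfolding rel_nbhd_def agree_entourage_def by blast
  have "N2 \<subseteq> N1" "N1 \<subseteq> N2"
    using Fix_subset_nbhd_imp_subset[OF assms N(1,2), of UNIV]
      Fix_subset_nbhd_imp_subset[OF assms N(2,1), of UNIV] self eq by simp_all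
  then show "N1 = N2" by (rule subset_antisym[rotated])
qed

theorem theorem6p3:
  fixes A :: "'a set"
  shows "unif_cont (normal_subgroups :: 'g::group_add set set) nsub_entourages (hb_entourages A) (Fix A)
     \<and> ((\<exists>a\<in>A. \<exists>b\<in>A. a \<noteq> b) \<longrightarrow>
          unif_embedding (normal_subgroups :: 'g set set) nsub_entourages (hb_entourages A) (Fix A))"
proof (intro conjI impI)
  show "unif_cont (normal_subgroups :: 'g set set) nsub_entourages (hb_entourages A) (Fix A)"
    by (rule unif_cont_Fix)
  assume "\<exists>a\<in>A. \<exists>b\<in>A. a \<noteq> b"
  then obtain a b where ab: "a \<in> A" "b \<in> A" "a \<noteq> b" by blast
  show "unif_embedding (normal_subgroups :: 'g set set) nsub_entourages (hb_entourages A) (Fix A)"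
    unfolding unif_embedding_def
    using inj_on_Fix[OF ab] unif_cont_Fix Fix_reflects_entourages[OF ab] by blast
qed

end
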